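(* Let $a>1$ and consider the planar system of ODEs $$\dot x = x\,(|x|^a-|y|),\qquad \dot y = y\left(\tfrac12 |x|^a-|y|\right),$$ which for $x,y\ge 0$ reads $\dot x = x(x^a-y)$, $\dot y = y(\tfrac12 x^a - y)$. Then the origin $0$ is an equilibrium and its stability index (with respect to $X=\{0\}$) is $\sigma(0)=a-1>0$.
   Context: For a flow on $\mathbb{R}^n$ and a compact invariant set $X$, $\ell$ denotes Lebesgue measure, $B_\varepsilon(x)$ the $\varepsilon$-neighbourhood of $x$, and ${\cal B}(X)$ the basin of attraction of $X$, i.e. the set of points whose $\omega$-limit set is contained in $X$. For $x\in X$ and $\varepsilon>0$ let $\Sigma_\varepsilon(x)=\ell(B_\varepsilon(x)\cap{\cal B}(X))/\ell(B_\varepsilon(x))$, $\sigma_-(x)=\lim_{\varepsilon\to0}\ln(\Sigma_\varepsilon(x))/\ln\varepsilon$, $\sigma_+(x)=\lim_{\varepsilon\to0}\ln(1-\Sigma_\varepsilon(x))/\ln\varepsilon$, with the conventions $\sigma_-(x)=\infty$ if $\Sigma_\varepsilon(x)=0$ for some $\varepsilon>0$ and $\sigma_+(x)=\infty$ if $\Sigma_\varepsilon(x)=1$ for some $\varepsilon>0$. The stability index is $\sigma(x)=\sigma_+(x)-\sigma_-(x)\in[-\infty,\infty]$. Here $X=\{0\}$ and $x=0$. *)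

theory Defs
  imports "HOL-Analysis.Analysis"
begin

definition fwd_solution :: "('a::real_normed_vector \<Rightarrow> 'a) \<Rightarrow> 'a \<Rightarrow> (real \<Rightarrow> 'a) \<Rightarrow> bool" where
  "fwd_solution F p \<phi> \<longleftrightarrow> \<phi> 0 = p \<and>
     (\<forall>t\<ge>0. (\<phi> has_vector_derivative F (\<phi> t)) (at t within {0..}))"

definition omega_limit :: "(real \<Rightarrow> 'a::topological_space) \<Rightarrow> 'a set" where
  "omega_limit \<phi> = {z. \<exists>s::nat \<Rightarrow> real. filterlim s at_top sequentially \<and> ((\<lambda>n. \<phi> (s n)) \<longlonglongrightarrow> z)}"

definition basin :: "('a::real_normed_vector \<Rightarrow> 'a) \<Rightarrow> 'a set \<Rightarrow> 'a set" where
  "basin F X = {p. \<exists>\<phi>. fwd_solution F p \<phi> \<and> omega_limit \<phi> \<subseteq> X}"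

definition Sigma_eps :: "'a::euclidean_space set \<Rightarrow> 'a \<Rightarrow> real \<Rightarrow> real" where
  "Sigma_eps B x \<epsilon> = measure lebesgue (ball x \<epsilon> \<inter> B) / measure lebesgue (ball x \<epsilon>)"

definition is_sigma_minus :: "'a::euclidean_space set \<Rightarrow> 'a \<Rightarrow> ereal \<Rightarrow> bool" where
  "is_sigma_minus B x s \<longleftrightarrow>
     (if \<exists>\<epsilon>>0. Sigma_eps B x \<epsilon> = 0 then s = \<infinity>
      else ((\<lambda>\<epsilon>. ereal (ln (Sigma_eps B x \<epsilon>) / ln \<epsilon>)) \<longlongrightarrow> s) (at_right 0))"

definition is_sigma_plus :: "'a::euclidean_space set \<Rightarrow> 'a \<Rightarrow> ereal \<Rightarrow> bool" where
  "is_sigma_plus B x s \<longleftrightarrow>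
     (if \<exists>\<epsilon>>0. Sigma_eps B x \<epsilon> = 1 then s = \<infinity>
      else ((\<lambda>\<epsilon>. ereal (ln (1 - Sigma_eps B x \<epsilon>) / ln \<epsilon>)) \<longlongrightarrow> s) (at_right 0))"

definition is_stability_index :: "'a::euclidean_space set \<Rightarrow> 'a \<Rightarrow> ereal \<Rightarrow> bool" where
  "is_stability_index B x s \<longleftrightarrow>
     (\<exists>sp sm. is_sigma_plus B x sp \<and> is_sigma_minus B x sm \<and> s = sp - sm)"

definition field_a :: "real \<Rightarrow> real \<times> real \<Rightarrow> real \<times> real" where
  "field_a a = (\<lambda>(x, y). (x * (\<bar>x\<bar> powr a - \<bar>y\<bar>), y * ((1/2) * \<bar>x\<bar> powr a - \<bar>y\<bar>)))"

end

theory Submission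
  imports Defs
begin

text \<open>
  For \<open>x, y > 0\<close> the ratio \<open>q = y / x\<^sup>a\<close> satisfies \<open>q' = (a - 1) x\<^sup>a q (q - w)\<close> with
  \<open>w = (a - 1/2) / (a - 1)\<close>, and the system is symmetric under \<open>x \<mapsto> -x\<close>, \<open>y \<mapsto> -y\<close>.
  In the cusp \<open>|y| < w |x|\<^sup>a\<close> no solution exists for all forward time: on the \<open>x\<close>-axis
  \<open>x' = x\<^sup>a\<^sup>+\<^sup>1\<close> blows up, and otherwise the gap \<open>w - q\<close> would grow like \<open>(1 + y\<^sub>0 t)\<^sup>a\<^sup>-\<^sup>1\<close>
  while staying below \<open>w\<close>.  Outside the cusp the solutions are explicit (on the \<open>y\<close>-axis, on
  the separatrix \<open>|y| = w |x|\<^sup>a\<close>, and above it after a time change found by separation of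
  variables) and tend to the origin.  So the basin is the complement of the cusp, which fills a
  fraction of order \<open>\<epsilon>\<^sup>a\<^sup>-\<^sup>1\<close> of the \<open>\<epsilon>\<close>-ball; hence \<open>\<sigma>\<^sub>+(0) = a - 1\<close> and \<open>\<sigma>\<^sub>-(0) = 0\<close>.
\<close>

section \<open>Solutions of autonomous equations on \<open>[0, \<infinity>)\<close>\<close>

lemma has_real_derivative_nonneg_imp_mono_on_nonneg:
  fixes f :: "real \<Rightarrow> real"
  assumes deriv: "\<And>t. t \<ge> 0 \<Longrightarrow> (f has_real_derivative f' t) (at t within {0..})"
    and nonneg: "\<And>t. t \<ge> 0 \<Longrightarrow> f' t \<ge> 0" and "0 \<le> s" "s \<le> t"
  shows "f s \<le> f t"
proof (rule DERIV_nonneg_imp_increasing_open[OF \<open>s \<le> t\<close>])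
  fix x assume "s < x" "x < t"
  then have "x > 0" using \<open>0 \<le> s\<close> by auto
  then have "at x within {0..} = at x"
    by (intro at_within_interior) auto
  then show "\<exists>y. DERIV f x :> y \<and> 0 \<le> y"
    using deriv nonneg \<open>x > 0\<close> by (metis less_imp_le)
next
  show "continuous_on {s..t} f"
  proof (rule continuous_on_subset)
    show "continuous_on {0..} f"
      using deriv by (auto simp: continuous_on_eq_continuous_within intro: DERIV_continuous)
  qed (use \<open>0 \<le> s\<close> in auto)
qed

lemma linear_ode_solution_eq:
  fixes f c :: "real \<Rightarrow> real"
  assumes deriv: "\<And>t. t \<ge> 0 \<Longrightarrow> (f has_real_derivative c t * f t) (at t within {0..})"
    and cont: "continuous_on {0..} c" and "t \<ge> 0"
  shows "f t = f 0 * exp (integral {0..t} c)"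
proof -
  have integral_deriv: "((\<lambda>u. integral {0..u} c) has_real_derivative c u) (at u within {0..})"
    if "u \<ge> 0" for u
  proof -
    have "((\<lambda>u. integral {0..u} c) has_vector_derivative c u) (at u within {0..u+1})"
      using that continuous_on_subset[OF cont] by (intro integral_has_vector_derivative) auto
    moreover have "at u within {0..u+1} = at u within {0..}"
      by (rule at_within_nhd[of _ "{u-1<..<u+1}"]) auto
    ultimately show ?thesis by (simp add: has_real_derivative_iff_has_vector_derivative)
  qed
  define H where "H u = f u * exp (- integral {0..u} c)" for u
  have "(H has_real_derivative 0) (at u within {0..})" if "u \<ge> 0" for u
  proof -
    have "(H has_real_derivative (c u * f u) * exp (- integral {0..u} c)
            + f u * (exp (- integral {0..u} c) * (- c u))) (at u within {0..})"
      unfolding H_def using deriv that integral_deriv[OF that]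
      by (intro derivative_eq_intros) auto
    then show ?thesis by (simp add: algebra_simps)
  qed
  then obtain k where "\<forall>u\<in>{0..}. H u = k"
    using has_field_derivative_zero_constant[of "{0..}" H] by (auto simp: convex_real_interval)
  then have "H t = H 0" using \<open>t \<ge> 0\<close> by auto
  then show ?thesis unfolding H_def by (simp add: exp_minus field_simps)
qed

lemma fwd_solution_continuous_on:
  assumes "fwd_solution F p \<phi>"
  shows "continuous_on {0..} \<phi>"
  using assms unfolding fwd_solution_def continuous_on_eq_continuous_within
  by (auto intro: has_vector_derivative_continuous)

lemma fwd_solution_Pair_derivatives:
  assumes "fwd_solution F p \<phi>" "t \<ge> 0"
  shows "((\<lambda>t. fst (\<phi> t)) has_real_derivative fst (F (\<phi> t))) (at t within {0..})"
    and "((\<lambda>t. snd (\<phi> t)) has_real_derivative snd (F (\<phi> t))) (at t within {0..})"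
proof -
  have d: "(\<phi> has_vector_derivative F (\<phi> t)) (at t within {0..})"
    using assms unfolding fwd_solution_def by auto
  show "((\<lambda>t. fst (\<phi> t)) has_real_derivative fst (F (\<phi> t))) (at t within {0..})"
    using bounded_linear.has_vector_derivative[OF bounded_linear_fst d]
    by (simp add: has_real_derivative_iff_has_vector_derivative)
  show "((\<lambda>t. snd (\<phi> t)) has_real_derivative snd (F (\<phi> t))) (at t within {0..})"
    using bounded_linear.has_vector_derivative[OF bounded_linear_snd d]
    by (simp add: has_real_derivative_iff_has_vector_derivative)
qed

lemma fwd_solution_PairI:
  fixes F :: "real \<times> real \<Rightarrow> real \<times> real"
  assumes "x 0 = x0" "y 0 = y0"
    and "\<And>t. t \<ge> 0 \<Longrightarrow> (x has_real_derivative fst (F (x t, y t))) (at t within {0..})"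
    and "\<And>t. t \<ge> 0 \<Longrightarrow> (y has_real_derivative snd (F (x t, y t))) (at t within {0..})"
  shows "fwd_solution F (x0, y0) (\<lambda>t. (x t, y t))"
  unfolding fwd_solution_def
proof (intro conjI allI impI)
  fix t :: real assume "t \<ge> 0"
  then show "((\<lambda>t. (x t, y t)) has_vector_derivative F (x t, y t)) (at t within {0..})"
    using has_vector_derivative_Pair assms(3,4)
    by (fastforce simp: has_real_derivative_iff_has_vector_derivative)
qed (use assms in simp)

lemma fwd_solution_time_change:
  fixes \<Psi> :: "real \<Rightarrow> 'a::real_normed_vector"
  assumes "\<tau> 0 = u0" "\<Psi> u0 = p"
    and \<tau>: "\<And>t. t \<ge> 0 \<Longrightarrow> (\<tau> has_real_derivative g (\<tau> t)) (at t within {0..})"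
    and \<Psi>: "\<And>t. t \<ge> 0 \<Longrightarrow> (\<Psi> has_vector_derivative \<Psi>' (\<tau> t)) (at (\<tau> t))"
    and field: "\<And>t. t \<ge> 0 \<Longrightarrow> g (\<tau> t) *\<^sub>R \<Psi>' (\<tau> t) = F (\<Psi> (\<tau> t))"
  shows "fwd_solution F p (\<Psi> \<circ> \<tau>)"
  unfolding fwd_solution_def
proof (intro conjI allI impI)
  show "(\<Psi> \<circ> \<tau>) 0 = p" using assms by simp
  fix t :: real assume t: "t \<ge> 0"
  have "((\<Psi> \<circ> \<tau>) has_vector_derivative g (\<tau> t) *\<^sub>R \<Psi>' (\<tau> t)) (at t within {0..})"
    using \<tau>[OF t] \<Psi>[OF t] has_vector_derivative_at_within
    by (intro vector_diff_chain_within) (auto simp: has_real_derivative_iff_has_vector_derivative)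
  then show "((\<Psi> \<circ> \<tau>) has_vector_derivative F ((\<Psi> \<circ> \<tau>) t)) (at t within {0..})"
    using field[OF t] by simp
qed

lemma increasing_function_inverse_on_nonneg:
  fixes T T' :: "real \<Rightarrow> real"
  assumes deriv: "\<And>u. u > m \<Longrightarrow> (T has_real_derivative T' u) (at u)"
    and pos: "\<And>u. u > m \<Longrightarrow> T' u > 0" and "m < c" "T c = 0"
    and unbounded: "filterlim T at_top at_top"
  obtains \<tau> where "\<tau> 0 = c" "\<And>t. t \<ge> 0 \<Longrightarrow> \<tau> t \<ge> c"
    "\<And>t. t \<ge> 0 \<Longrightarrow> (\<tau> has_real_derivative inverse (T' (\<tau> t))) (at t)"
    "filterlim \<tau> at_top at_top"
proof -
  have T_cont: "continuous_on {m<..} T"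
    using deriv by (intro continuous_at_imp_continuous_on ballI) (auto intro: DERIV_isCont)
  have T_less: "T u < T v" if "m < u" "u < v" for u v
  proof (rule DERIV_pos_imp_increasing[OF that(2)])
    fix x assume "u \<le> x" "x \<le> v"
    then have "x > m" using that by auto
    then show "\<exists>y. DERIV T x :> y \<and> 0 < y" using deriv pos by blast
  qed
  have T_inj: "inj_on T {m<..}"
  proof (rule inj_onI)
    fix u v assume "u \<in> {m<..}" "v \<in> {m<..}" "T u = T v"
    then show "u = v" using T_less[of u v] T_less[of v u]
      by (cases u v rule: linorder_cases) auto
  qed
  have T_onto: "\<exists>u\<ge>c. T u = t" if "t \<ge> 0" for t
  proof -
    obtain N where "\<And>u. u \<ge> N \<Longrightarrow> T u \<ge> t"
      using unbounded unfolding filterlim_at_top eventually_at_top_linorder by blast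
    then have "T (max N c) \<ge> t" by simp
    then show ?thesis
      using IVT[of T c t "max N c"] \<open>T c = 0\<close> that T_cont \<open>m < c\<close>
      by (force simp: continuous_on_eq_continuous_at)
  qed
  define \<tau> where "\<tau> = inv_into {m<..} T"
  have \<tau>_T: "\<tau> (T u) = u" if "u > m" for u
    using that unfolding \<tau>_def by (intro inv_into_f_f[OF T_inj]) auto
  have \<tau>: "\<tau> t \<ge> c \<and> T (\<tau> t) = t" if t: "t \<ge> 0" for t
  proof -
    obtain u where "u \<ge> c" "T u = t" using T_onto[OF t] by blast
    then show ?thesis using \<tau>_T[of u] \<open>m < c\<close> by auto
  qed
  show thesis
  proof
    show "\<tau> 0 = c" using \<tau>_T[of c] \<open>T c = 0\<close> \<open>m < c\<close> by simp
    show "\<tau> t \<ge> c" if "t \<ge> 0" for t using \<tau>[OF that] by simp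
    show "(\<tau> has_real_derivative inverse (T' (\<tau> t))) (at t)" if "t \<ge> 0" for t
    proof -
      define u where "u = \<tau> t"
      have u: "u > m" "T u = t" using \<tau>[OF that] \<open>m < c\<close> by (auto simp: u_def)
      have "(\<tau> has_derivative (*) (inverse (T' u))) (at (T u))"
      proof (rule has_derivative_inverse_strong[of "{m<..}" u T \<tau> "(*) (T' u)"])
        show "(T has_derivative (*) (T' u)) (at u)"
          using deriv[OF u(1)] by (simp add: has_field_derivative_def)
        show "(*) (T' u) \<circ> (*) (inverse (T' u)) = id"
          using pos[OF u(1)] by (auto simp: fun_eq_iff)
      qed (use u T_cont \<tau>_T in auto)
      then show ?thesis using u by (simp add: has_field_derivative_def u_def)
    qed
    show "filterlim \<tau> at_top at_top"
      unfolding filterlim_at_top eventually_at_top_linorder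
    proof
      fix Z :: real
      have "Z \<le> \<tau> t" if t: "t \<ge> max 0 (T (max Z c))" for t
      proof -
        have "\<not> \<tau> t < max Z c"
          using \<tau>[of t] T_less[of "\<tau> t" "max Z c"] t \<open>m < c\<close> by auto
        then show ?thesis by simp
      qed
      then show "\<exists>N. \<forall>t\<ge>N. Z \<le> \<tau> t" by blast
    qed
  qed
qed

text \<open>Separation of variables: \<open>\<tau>\<close> is the inverse of the travel time \<open>u \<mapsto> \<integral>\<^sub>c\<^sup>u 1/g\<close>,
  which is defined on all of \<open>[0, \<infinity>)\<close> because the travel time is unbounded.\<close>
lemma autonomous_scalar_ode_solution:
  fixes g :: "real \<Rightarrow> real"
  assumes cont: "continuous_on {l<..} g" and pos: "\<And>u. u > l \<Longrightarrow> g u > 0" and "l < c"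
    and unbounded: "filterlim (\<lambda>u. integral {c..u} (\<lambda>v. 1 / g v)) at_top at_top"
  obtains \<tau> where "\<tau> 0 = c" "\<And>t. t \<ge> 0 \<Longrightarrow> \<tau> t \<ge> c"
    "\<And>t. t \<ge> 0 \<Longrightarrow> (\<tau> has_real_derivative g (\<tau> t)) (at t)"
    "filterlim \<tau> at_top at_top"
proof -
  define m where "m = (l + c) / 2"
  have m: "l < m" "m < c" using \<open>l < c\<close> by (auto simp: m_def)
  define T where "T = (\<lambda>u. integral {m..u} (\<lambda>v. 1 / g v) - integral {m..c} (\<lambda>v. 1 / g v))"
  have cont_inv: "continuous_on {m..u} (\<lambda>v. 1 / g v)" for u
  proof (intro continuous_on_divide continuous_on_const continuous_on_subset[OF cont])
    show "{m..u} \<subseteq> {l<..}" using m by auto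
    show "\<forall>v\<in>{m..u}. g v \<noteq> 0"
    proof
      fix v assume "v \<in> {m..u}"
      then have "g v > 0" using m pos[of v] by auto
      then show "g v \<noteq> 0" by simp
    qed
  qed
  have T_deriv: "(T has_real_derivative 1 / g u) (at u)" if "u > m" for u
  proof -
    have "((\<lambda>u. integral {m..u} (\<lambda>v. 1 / g v)) has_vector_derivative 1 / g u) (at u within {m..u+1})"
      using that by (intro integral_has_vector_derivative cont_inv) auto
    moreover have "at u within {m..u+1} = at u"
      using that by (intro at_within_interior) auto
    ultimately have "((\<lambda>u. integral {m..u} (\<lambda>v. 1 / g v)) has_real_derivative 1 / g u) (at u)"
      by (simp add: has_real_derivative_iff_has_vector_derivative)
    then show ?thesis
      unfolding T_def using DERIV_diff[OF _ DERIV_const] by fastforce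
  qed
  have "T u = integral {c..u} (\<lambda>v. 1 / g v)" if "u \<ge> c" for u
  proof -
    have "integral {m..c} (\<lambda>v. 1 / g v) + integral {c..u} (\<lambda>v. 1 / g v) = integral {m..u} (\<lambda>v. 1 / g v)"
      using that m
      by (intro Henstock_Kurzweil_Integration.integral_combine integrable_continuous_real cont_inv) auto
    then show ?thesis by (simp add: T_def)
  qed
  then have "filterlim T at_top at_top"
    by (intro filterlim_at_top_mono[OF unbounded] eventually_at_top_linorderI[of c]) simp
  moreover have "T c = 0" by (simp add: T_def)
  ultimately obtain \<tau> where "\<tau> 0 = c" "\<And>t. t \<ge> 0 \<Longrightarrow> \<tau> t \<ge> c"
    "\<And>t. t \<ge> 0 \<Longrightarrow> (\<tau> has_real_derivative inverse (1 / g (\<tau> t))) (at t)"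
    "filterlim \<tau> at_top at_top"
    using increasing_function_inverse_on_nonneg[of m T "\<lambda>u. 1 / g u" c] T_deriv pos m by auto
  then show thesis using that by simp
qed

lemma filterlim_affine_at_top:
  fixes b c :: real
  assumes "c > 0"
  shows "filterlim (\<lambda>t. b + c * t) at_top at_top"
  by (intro filterlim_tendsto_add_at_top[OF tendsto_const]
      filterlim_tendsto_pos_mult_at_top[OF tendsto_const assms filterlim_ident])

lemma omega_limit_subset_if_tendsto:
  fixes \<phi> :: "real \<Rightarrow> 'a::t2_space"
  assumes "(\<phi> \<longlongrightarrow> z) at_top"
  shows "omega_limit \<phi> \<subseteq> {z}"
proof
  fix w assume "w \<in> omega_limit \<phi>"
  then obtain s :: "nat \<Rightarrow> real" where s: "filterlim s at_top sequentially" "(\<lambda>n. \<phi> (s n)) \<longlonglongrightarrow> w"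
    unfolding omega_limit_def by auto
  have "(\<lambda>n. \<phi> (s n)) \<longlonglongrightarrow> z" using filterlim_compose[OF assms s(1)] .
  then show "w \<in> {z}" using s(2) LIMSEQ_unique by auto
qed

lemma in_basin_if_tendsto:
  assumes "fwd_solution F p \<phi>" "(\<phi> \<longlongrightarrow> z) at_top" "z \<in> X"
  shows "p \<in> basin F X"
  using assms omega_limit_subset_if_tendsto unfolding basin_def by blast

section \<open>Stability indices from a power law\<close>

lemma measure_lebesgue_ball_pos:
  fixes x :: "'a::euclidean_space"
  assumes "r > 0"
  shows "measure lebesgue (ball x r) > 0"
  using content_ball_pos[OF assms] by (simp add: measure_completion)

lemma one_minus_Sigma_eps:
  fixes B :: "'a::euclidean_space set"
  assumes B: "B \<in> sets lebesgue" and "\<epsilon> > 0"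
  shows "1 - Sigma_eps B x \<epsilon> = measure lebesgue (ball x \<epsilon> - B) / measure lebesgue (ball x \<epsilon>)"
proof -
  have "measure lebesgue (ball x \<epsilon> - B) = measure lebesgue (ball x \<epsilon> - (ball x \<epsilon> \<inter> B))"
    by (simp add: Diff_Int)
  also have "\<dots> = measure lebesgue (ball x \<epsilon>) - measure lebesgue (ball x \<epsilon> \<inter> B)"
    using B lmeasurable_ball[of x \<epsilon>] by (intro measure_Diff) (auto simp: fmeasurable_def)
  finally show ?thesis
    using measure_lebesgue_ball_pos[OF \<open>\<epsilon> > 0\<close>, of x]
    by (simp add: Sigma_eps_def diff_divide_distrib)
qed

lemma Sigma_eps_eq_1_shrink:
  fixes B :: "'a::euclidean_space set"
  assumes B: "B \<in> sets lebesgue" and "0 < \<delta>" "\<delta> \<le> \<epsilon>" and "Sigma_eps B x \<epsilon> = 1"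
  shows "Sigma_eps B x \<delta> = 1"
proof -
  have "measure lebesgue (ball x \<epsilon> - B) = 0"
    using one_minus_Sigma_eps[OF B, of \<epsilon> x] assms measure_lebesgue_ball_pos[of \<epsilon> x] by simp
  moreover have "measure lebesgue (ball x \<delta> - B) \<le> measure lebesgue (ball x \<epsilon> - B)"
    using B assms by (intro measure_mono_fmeasurable) (auto intro: fmeasurable_Diff)
  ultimately have "measure lebesgue (ball x \<delta> - B) = 0"
    by (simp add: measure_nonneg order_antisym)
  then show ?thesis using one_minus_Sigma_eps[OF B \<open>0 < \<delta>\<close>, of x] by simp
qed

lemma Sigma_eps_eq_0_shrink:
  fixes B :: "'a::euclidean_space set"
  assumes B: "B \<in> sets lebesgue" and "0 < \<delta>" "\<delta> \<le> \<epsilon>" and "Sigma_eps B x \<epsilon> = 0"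
  shows "Sigma_eps B x \<delta> = 0"
proof -
  have "measure lebesgue (ball x \<epsilon> \<inter> B) = 0"
    using assms measure_lebesgue_ball_pos[of \<epsilon> x] by (simp add: Sigma_eps_def)
  moreover have "measure lebesgue (ball x \<delta> \<inter> B) \<le> measure lebesgue (ball x \<epsilon> \<inter> B)"
    using B assms by (intro measure_mono_fmeasurable fmeasurable_Int_fmeasurable) auto
  ultimately show ?thesis
    by (simp add: Sigma_eps_def measure_nonneg order_antisym)
qed

lemma ln_at_right_0_at_infinity: "LIM \<epsilon> at_right 0. ln (\<epsilon>::real) :> at_infinity"
  by (rule filterlim_mono[OF ln_at_0 at_bot_le_at_infinity order_refl])

lemma tendsto_ln_div_ln_of_power_law:
  fixes f :: "real \<Rightarrow> real"
  assumes "k1 > 0"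
    and bounds: "\<forall>\<^sub>F \<epsilon> in at_right 0. k1 * \<epsilon> powr p \<le> f \<epsilon> \<and> f \<epsilon> \<le> k2 * \<epsilon> powr p"
  shows "((\<lambda>\<epsilon>. ln (f \<epsilon>) / ln \<epsilon>) \<longlongrightarrow> p) (at_right 0)"
proof (rule tendsto_sandwich[where f="\<lambda>\<epsilon>. ln k2 / ln \<epsilon> + p" and h="\<lambda>\<epsilon>. ln k1 / ln \<epsilon> + p"])
  have small: "\<forall>\<^sub>F \<epsilon> in at_right 0. 0 < \<epsilon> \<and> \<epsilon> < (1::real)"
    by (simp add: eventually_at_right_field) (auto intro: exI[of _ 1])
  have ln_bound: "ln (k * \<epsilon> powr p) / ln \<epsilon> = ln k / ln \<epsilon> + p"
    if "k > 0" "0 < \<epsilon>" "\<epsilon> < 1" for k \<epsilon> :: real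
    using that by (simp add: ln_mult ln_powr add_divide_distrib)
  show "\<forall>\<^sub>F \<epsilon> in at_right 0. ln k2 / ln \<epsilon> + p \<le> ln (f \<epsilon>) / ln \<epsilon>"
    using bounds small
  proof eventually_elim
    case (elim \<epsilon>)
    have pos: "0 < k1 * \<epsilon> powr p" using \<open>k1 > 0\<close> elim by simp
    then have "0 < k2 * \<epsilon> powr p" using elim by linarith
    then have "0 < k2" using elim by (simp add: zero_less_mult_iff)
    have "ln (f \<epsilon>) \<le> ln (k2 * \<epsilon> powr p)" using elim pos by auto
    then have "ln (k2 * \<epsilon> powr p) / ln \<epsilon> \<le> ln (f \<epsilon>) / ln \<epsilon>"
      using elim by (intro divide_right_mono_neg) auto
    then show ?case using ln_bound[of k2 \<epsilon>] elim \<open>0 < k2\<close> by simp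
  qed
  show "\<forall>\<^sub>F \<epsilon> in at_right 0. ln (f \<epsilon>) / ln \<epsilon> \<le> ln k1 / ln \<epsilon> + p"
    using bounds small
  proof eventually_elim
    case (elim \<epsilon>)
    moreover have "0 < k1 * \<epsilon> powr p" using \<open>k1 > 0\<close> elim by simp
    ultimately have "ln (k1 * \<epsilon> powr p) \<le> ln (f \<epsilon>)" by simp
    then have "ln (f \<epsilon>) / ln \<epsilon> \<le> ln (k1 * \<epsilon> powr p) / ln \<epsilon>"
      using elim by (intro divide_right_mono_neg) auto
    then show ?case using ln_bound[of k1 \<epsilon>] elim \<open>k1 > 0\<close> by simp
  qed
  show "((\<lambda>\<epsilon>. ln k2 / ln \<epsilon> + p) \<longlongrightarrow> p) (at_right 0)"
    and "((\<lambda>\<epsilon>. ln k1 / ln \<epsilon> + p) \<longlongrightarrow> p) (at_right 0)"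
    using tendsto_add[OF tendsto_divide_0[OF tendsto_const ln_at_right_0_at_infinity] tendsto_const]
    by auto
qed

lemma Sigma_eps_tendsto_1_of_power_law:
  assumes "p > 0" "k1 > 0"
    and bounds: "\<forall>\<^sub>F \<epsilon> in at_right 0.
       k1 * \<epsilon> powr p \<le> 1 - Sigma_eps B x \<epsilon> \<and> 1 - Sigma_eps B x \<epsilon> \<le> k2 * \<epsilon> powr p"
  shows "((\<lambda>\<epsilon>. Sigma_eps B x \<epsilon>) \<longlongrightarrow> 1) (at_right 0)"
proof -
  have pos: "\<forall>\<^sub>F \<epsilon> in at_right 0. (0::real) < \<epsilon>"
    by (rule eventually_at_right_less)
  have "((\<lambda>\<epsilon>. \<epsilon> powr p) \<longlongrightarrow> 0) (at_right 0)"
  proof (rule tendsto_zero_powrI)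
    show "((\<lambda>\<epsilon>::real. \<epsilon>) \<longlongrightarrow> 0) (at_right 0)" by (rule tendsto_ident_at)
    show "\<forall>\<^sub>F \<epsilon> in at_right 0. 0 \<le> (\<epsilon>::real)" using pos by eventually_elim simp
  qed (use \<open>p > 0\<close> in auto)
  from tendsto_mult[OF tendsto_const this, of k2]
  have upper_to_0: "((\<lambda>\<epsilon>. k2 * \<epsilon> powr p) \<longlongrightarrow> 0) (at_right 0)" by simp
  have nonneg: "\<forall>\<^sub>F \<epsilon> in at_right 0. 0 \<le> 1 - Sigma_eps B x \<epsilon>"
    using bounds pos
  proof eventually_elim
    case (elim \<epsilon>)
    then have "0 < k1 * \<epsilon> powr p" using \<open>k1 > 0\<close> by simp
    then show ?case using elim by linarith
  qed
  have upper: "\<forall>\<^sub>F \<epsilon> in at_right 0. 1 - Sigma_eps B x \<epsilon> \<le> k2 * \<epsilon> powr p"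
    using bounds by eventually_elim simp
  have "((\<lambda>\<epsilon>. 1 - Sigma_eps B x \<epsilon>) \<longlongrightarrow> 0) (at_right 0)"
    by (rule tendsto_sandwich[OF nonneg upper tendsto_const upper_to_0])
  from tendsto_diff[OF tendsto_const[of 1] this] show ?thesis by simp
qed

lemma is_sigma_plus_of_power_law:
  fixes B :: "'a::euclidean_space set"
  assumes B: "B \<in> sets lebesgue" and "k1 > 0"
    and bounds: "\<forall>\<^sub>F \<epsilon> in at_right 0.
       k1 * \<epsilon> powr p \<le> 1 - Sigma_eps B x \<epsilon> \<and> 1 - Sigma_eps B x \<epsilon> \<le> k2 * \<epsilon> powr p"
  shows "is_sigma_plus B x (ereal p)"
proof -
  have never_1: "\<not> (\<exists>\<epsilon>>0. Sigma_eps B x \<epsilon> = 1)"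
  proof
    assume "\<exists>\<epsilon>>0. Sigma_eps B x \<epsilon> = 1"
    then obtain \<epsilon> where \<epsilon>: "\<epsilon> > 0" "Sigma_eps B x \<epsilon> = 1" by blast
    have "\<forall>\<^sub>F \<delta> in at_right 0. 0 < \<delta> \<and> \<delta> < \<epsilon>"
      using \<epsilon>(1) unfolding eventually_at_right_field by (intro exI[of _ \<epsilon>]) simp
    then obtain \<delta> where "k1 * \<delta> powr p \<le> 1 - Sigma_eps B x \<delta>" "0 < \<delta>" "\<delta> < \<epsilon>"
      using eventually_happens'[OF _ eventually_conj[OF bounds]] by auto
    moreover have "0 < k1 * \<delta> powr p" using \<open>k1 > 0\<close> \<open>0 < \<delta>\<close> by simp
    ultimately show False using Sigma_eps_eq_1_shrink[OF B, of \<delta> \<epsilon>] \<epsilon> by simp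
  qed
  show ?thesis
    unfolding is_sigma_plus_def if_not_P[OF never_1] lim_ereal
    by (rule tendsto_ln_div_ln_of_power_law[OF \<open>k1 > 0\<close> bounds])
qed

lemma is_sigma_minus_of_power_law:
  fixes B :: "'a::euclidean_space set"
  assumes B: "B \<in> sets lebesgue" and "p > 0" "k1 > 0"
    and bounds: "\<forall>\<^sub>F \<epsilon> in at_right 0.
       k1 * \<epsilon> powr p \<le> 1 - Sigma_eps B x \<epsilon> \<and> 1 - Sigma_eps B x \<epsilon> \<le> k2 * \<epsilon> powr p"
  shows "is_sigma_minus B x (ereal 0)"
proof -
  note Sigma_to_1 = Sigma_eps_tendsto_1_of_power_law[OF \<open>p > 0\<close> \<open>k1 > 0\<close> bounds]
  have never_0: "\<not> (\<exists>\<epsilon>>0. Sigma_eps B x \<epsilon> = 0)"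
  proof
    assume "\<exists>\<epsilon>>0. Sigma_eps B x \<epsilon> = 0"
    then obtain \<epsilon> where \<epsilon>: "\<epsilon> > 0" "Sigma_eps B x \<epsilon> = 0" by blast
    have "\<forall>\<^sub>F \<delta> in at_right 0. 0 < \<delta> \<and> \<delta> < \<epsilon>"
      using \<epsilon>(1) unfolding eventually_at_right_field by (intro exI[of _ \<epsilon>]) simp
    then obtain \<delta> where "1/2 < Sigma_eps B x \<delta>" "0 < \<delta>" "\<delta> < \<epsilon>"
      using eventually_happens'[OF _ eventually_conj[OF order_tendstoD(1)[OF Sigma_to_1, of "1/2"]]]
      by auto
    then show False using Sigma_eps_eq_0_shrink[OF B, of \<delta> \<epsilon>] \<epsilon> by simp
  qed
  show ?thesis
    unfolding is_sigma_minus_def if_not_P[OF never_0] lim_ereal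
    using tendsto_ln[OF Sigma_to_1] by (intro tendsto_divide_0[OF _ ln_at_right_0_at_infinity]) simp
qed

lemma is_stability_index_of_power_law:
  fixes B :: "'a::euclidean_space set"
  assumes "B \<in> sets lebesgue" and "p > 0" "k1 > 0"
    and "\<forall>\<^sub>F \<epsilon> in at_right 0.
       k1 * \<epsilon> powr p \<le> 1 - Sigma_eps B x \<epsilon> \<and> 1 - Sigma_eps B x \<epsilon> \<le> k2 * \<epsilon> powr p"
  shows "is_stability_index B x (ereal p)"
  using is_sigma_plus_of_power_law[OF assms(1,3,4)] is_sigma_minus_of_power_law[OF assms]
  unfolding is_stability_index_def by (intro exI[of _ "ereal p"] exI[of _ "ereal 0"]) simp

section \<open>Solutions of the planar system\<close>

definition separatrix_coeff :: "real \<Rightarrow> real" where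
  "separatrix_coeff a = (a - 1/2) / (a - 1)"

lemma separatrix_coeff_pos: "a > 1 \<Longrightarrow> separatrix_coeff a > 0"
  by (simp add: separatrix_coeff_def)

lemma field_a_Pair: "field_a a (x, y) = (x * (\<bar>x\<bar> powr a - \<bar>y\<bar>), y * ((1/2) * \<bar>x\<bar> powr a - \<bar>y\<bar>))"
  by (simp add: field_a_def)

lemma fwd_solution_field_a_reflect:
  assumes sol: "fwd_solution (field_a a) (x0, y0) \<phi>" and "\<bar>s1\<bar> = 1" "\<bar>s2\<bar> = 1"
  shows "fwd_solution (field_a a) (s1 * x0, s2 * y0) (\<lambda>t. (s1 * fst (\<phi> t), s2 * snd (\<phi> t)))"
proof (rule fwd_solution_PairI)
  show "s1 * fst (\<phi> 0) = s1 * x0" "s2 * snd (\<phi> 0) = s2 * y0"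
    using sol by (simp_all add: fwd_solution_def)
next
  fix t :: real assume t: "t \<ge> 0"
  have reflect: "field_a a (s1 * fst (\<phi> t), s2 * snd (\<phi> t))
      = (s1 * fst (field_a a (\<phi> t)), s2 * snd (field_a a (\<phi> t)))"
    using assms by (cases "\<phi> t") (simp add: field_a_def abs_mult algebra_simps)
  show "((\<lambda>t. s1 * fst (\<phi> t)) has_real_derivative
      fst (field_a a (s1 * fst (\<phi> t), s2 * snd (\<phi> t)))) (at t within {0..})"
    unfolding reflect using fwd_solution_Pair_derivatives(1)[OF sol t] by (simp add: DERIV_cmult)
  show "((\<lambda>t. s2 * snd (\<phi> t)) has_real_derivative
      snd (field_a a (s1 * fst (\<phi> t), s2 * snd (\<phi> t)))) (at t within {0..})"
    unfolding reflect using fwd_solution_Pair_derivatives(2)[OF sol t] by (simp add: DERIV_cmult)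
qed

lemma converging_field_a_solution_reflect:
  assumes "\<exists>\<phi>. fwd_solution (field_a a) (x0, y0) \<phi> \<and> (\<phi> \<longlongrightarrow> 0) at_top"
    and "\<bar>s1\<bar> = 1" "\<bar>s2\<bar> = 1"
  shows "\<exists>\<phi>. fwd_solution (field_a a) (s1 * x0, s2 * y0) \<phi> \<and> (\<phi> \<longlongrightarrow> 0) at_top"
proof -
  obtain \<phi> where sol: "fwd_solution (field_a a) (x0, y0) \<phi>" and lim: "(\<phi> \<longlongrightarrow> 0) at_top"
    using assms by blast
  have "((\<lambda>t. fst (\<phi> t)) \<longlongrightarrow> 0) at_top" "((\<lambda>t. snd (\<phi> t)) \<longlongrightarrow> 0) at_top"
    using tendsto_fst[OF lim] tendsto_snd[OF lim] by simp_all
  then have "((\<lambda>t. (s1 * fst (\<phi> t), s2 * snd (\<phi> t))) \<longlongrightarrow> (s1 * 0, s2 * 0)) at_top"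
    by (intro tendsto_Pair tendsto_mult tendsto_const)
  then show ?thesis
    using fwd_solution_field_a_reflect[OF sol assms(2,3)] by (auto simp: zero_prod_def)
qed

lemma field_a_solution_derivatives:
  assumes "fwd_solution (field_a a) p \<phi>" "t \<ge> 0"
  shows "((\<lambda>t. fst (\<phi> t)) has_real_derivative
           (\<bar>fst (\<phi> t)\<bar> powr a - \<bar>snd (\<phi> t)\<bar>) * fst (\<phi> t)) (at t within {0..})"
    and "((\<lambda>t. snd (\<phi> t)) has_real_derivative
           ((1/2) * \<bar>fst (\<phi> t)\<bar> powr a - \<bar>snd (\<phi> t)\<bar>) * snd (\<phi> t)) (at t within {0..})"
  using fwd_solution_Pair_derivatives[OF assms]
  by (simp_all add: field_a_def case_prod_beta mult.commute)

text \<open>Both components solve linear equations \<open>u' = c(t) u\<close>, so they never change sign.\<close>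
lemma field_a_solution_signs:
  assumes sol: "fwd_solution (field_a a) (x0, y0) \<phi>" and "a > 0" "t \<ge> 0"
  shows "x0 > 0 \<Longrightarrow> fst (\<phi> t) > 0" and "y0 > 0 \<Longrightarrow> snd (\<phi> t) > 0"
    and "y0 = 0 \<Longrightarrow> snd (\<phi> t) = 0"
proof -
  have init: "fst (\<phi> 0) = x0" "snd (\<phi> 0) = y0"
    using sol by (auto simp: fwd_solution_def)
  have "continuous_on {0..} (\<lambda>t. fst (\<phi> t))" "continuous_on {0..} (\<lambda>t. snd (\<phi> t))"
    using fwd_solution_continuous_on[OF sol] by (auto intro: continuous_intros)
  then have "continuous_on {0..} (\<lambda>t. \<bar>fst (\<phi> t)\<bar> powr a - \<bar>snd (\<phi> t)\<bar>)"
    and "continuous_on {0..} (\<lambda>t. (1/2) * \<bar>fst (\<phi> t)\<bar> powr a - \<bar>snd (\<phi> t)\<bar>)"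
    using \<open>a > 0\<close> by (auto intro!: continuous_intros continuous_on_powr')
  note x = linear_ode_solution_eq[OF field_a_solution_derivatives(1)[OF sol] this(1) \<open>t \<ge> 0\<close>]
   and y = linear_ode_solution_eq[OF field_a_solution_derivatives(2)[OF sol] this(2) \<open>t \<ge> 0\<close>]
  show "x0 > 0 \<Longrightarrow> fst (\<phi> t) > 0" using x init by simp
  show "y0 > 0 \<Longrightarrow> snd (\<phi> t) > 0" using y init by simp
  show "y0 = 0 \<Longrightarrow> snd (\<phi> t) = 0" using y init by simp
qed

text \<open>On the \<open>x\<close>-axis \<open>x' = x\<^sup>a\<^sup>+\<^sup>1\<close>, so \<open>x\<^sup>-\<^sup>a\<close> decreases with slope \<open>-a\<close> and would turn negative.\<close>
lemma field_a_no_global_solution_on_x_axis: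
  assumes "a > 0" "x0 > 0"
  shows "\<not> fwd_solution (field_a a) (x0, 0) \<phi>"
proof
  assume sol: "fwd_solution (field_a a) (x0, 0) \<phi>"
  define x where "x t = fst (\<phi> t)" for t
  have x_pos: "x t > 0" if "t \<ge> 0" for t
    using field_a_solution_signs(1)[OF sol \<open>a > 0\<close> that \<open>x0 > 0\<close>] by (simp add: x_def)
  have y_zero: "snd (\<phi> t) = 0" if "t \<ge> 0" for t
    using field_a_solution_signs(3)[OF sol \<open>a > 0\<close> that] by simp
  have deriv: "((\<lambda>t. - (x t powr (- a)) - a * t) has_real_derivative 0) (at t within {0..})"
    if t: "t \<ge> 0" for t
  proof -
    have "((\<lambda>t. - (x t powr (- a)) - a * t) has_real_derivative
        - ((- a) * x t powr (- a - 1) * ((\<bar>x t\<bar> powr a - \<bar>snd (\<phi> t)\<bar>) * x t)) - a) (at t within {0..})"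
      unfolding x_def using field_a_solution_derivatives(1)[OF sol t] x_pos[OF t]
      by (auto intro!: derivative_eq_intros simp: x_def)
    moreover have "- ((- a) * x t powr (- a - 1) * ((\<bar>x t\<bar> powr a - \<bar>snd (\<phi> t)\<bar>) * x t)) - a = 0"
      using x_pos[OF t] y_zero[OF t] by (simp add: powr_diff powr_minus field_simps)
    ultimately show ?thesis by metis
  qed
  define t1 where "t1 = x0 powr (- a) / a"
  have "t1 \<ge> 0" "a * t1 = x0 powr (- a)"
    using \<open>a > 0\<close> by (simp_all add: t1_def)
  moreover have "x 0 = x0" using sol by (simp add: x_def fwd_solution_def)
  moreover have "- (x 0 powr (- a)) - a * 0 \<le> - (x t1 powr (- a)) - a * t1"
    using \<open>t1 \<ge> 0\<close> by (intro has_real_derivative_nonneg_imp_mono_on_nonneg[OF deriv]) auto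
  ultimately have "x t1 powr (- a) \<le> 0" by simp
  moreover have "x t1 powr (- a) > 0" using x_pos[OF \<open>t1 \<ge> 0\<close>] by simp
  ultimately show False by simp
qed

text \<open>Since \<open>(1/y)' = 1 - x\<^sup>a/(2y) \<le> 1\<close>.\<close>
lemma field_a_snd_lower_bound:
  assumes sol: "fwd_solution (field_a a) (x0, y0) \<phi>" and "a > 0" "y0 > 0" "t \<ge> 0"
  shows "snd (\<phi> t) \<ge> y0 / (1 + y0 * t)"
proof -
  define y where "y t = snd (\<phi> t)" for t
  have y_pos: "y t > 0" if "t \<ge> 0" for t
    using field_a_solution_signs(2)[OF sol \<open>a > 0\<close> that \<open>y0 > 0\<close>] by (simp add: y_def)
  have deriv: "((\<lambda>t. t - 1 / y t) has_real_derivative \<bar>fst (\<phi> t)\<bar> powr a / (2 * y t)) (at t within {0..})"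
    if t: "t \<ge> 0" for t
  proof -
    have "((\<lambda>t. t - 1 / y t) has_real_derivative
        1 - (- (((1/2) * \<bar>fst (\<phi> t)\<bar> powr a - \<bar>y t\<bar>) * y t) / (y t)\<^sup>2)) (at t within {0..})"
      unfolding y_def using field_a_solution_derivatives(2)[OF sol t] y_pos[OF t]
      by (auto intro!: derivative_eq_intros simp: y_def power2_eq_square)
    moreover have "1 - (- (((1/2) * \<bar>fst (\<phi> t)\<bar> powr a - \<bar>y t\<bar>) * y t) / (y t)\<^sup>2)
        = \<bar>fst (\<phi> t)\<bar> powr a / (2 * y t)"
      using y_pos[OF t] by (simp add: field_simps power2_eq_square)
    ultimately show ?thesis by metis
  qed
  have "0 - 1 / y 0 \<le> t - 1 / y t"
    using y_pos \<open>t \<ge> 0\<close>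
    by (intro has_real_derivative_nonneg_imp_mono_on_nonneg[OF deriv]) (auto intro!: divide_nonneg_pos)
  moreover have "y 0 = y0" using sol by (simp add: y_def fwd_solution_def)
  ultimately have "1 / y t \<le> 1 / y0 + t" by simp
  also have "\<dots> = (1 + y0 * t) / y0" using \<open>y0 > 0\<close> by (simp add: field_simps)
  finally have "y0 / (1 + y0 * t) \<le> y t"
    using y_pos[OF \<open>t \<ge> 0\<close>] \<open>y0 > 0\<close> \<open>t \<ge> 0\<close>
    by (simp add: divide_le_eq le_divide_eq add_pos_nonneg mult.commute)
  then show ?thesis by (simp add: y_def)
qed

lemma field_a_separatrix_gap_deriv:
  assumes sol: "fwd_solution (field_a a) p \<phi>" and "a > 1" "t \<ge> 0"
    and x_pos: "fst (\<phi> t) > 0" and y_pos: "snd (\<phi> t) > 0"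
  defines "r \<equiv> \<lambda>t. separatrix_coeff a - snd (\<phi> t) * fst (\<phi> t) powr (- a)"
  shows "(r has_real_derivative ((a - 1) * snd (\<phi> t)) * r t) (at t within {0..})"
proof -
  define x where "x t = fst (\<phi> t)" for t
  define y where "y t = snd (\<phi> t)" for t
  have r_eq: "r = (\<lambda>t. separatrix_coeff a - y t * x t powr (- a))" by (simp add: r_def x_def y_def)
  have "x t > 0" "y t > 0" using x_pos y_pos by (simp_all add: x_def y_def)
  have "(r has_real_derivative - ((((1/2) * \<bar>x t\<bar> powr a - \<bar>y t\<bar>) * y t) * x t powr (- a)
        + y t * ((- a) * x t powr (- a - 1) * ((\<bar>x t\<bar> powr a - \<bar>y t\<bar>) * x t)))) (at t within {0..})"
    unfolding r_eq using field_a_solution_derivatives[OF sol \<open>t \<ge> 0\<close>] \<open>x t > 0\<close>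
    by (auto intro!: derivative_eq_intros simp: x_def y_def)
  moreover have "- ((((1/2) * \<bar>x t\<bar> powr a - \<bar>y t\<bar>) * y t) * x t powr (- a)
        + y t * ((- a) * x t powr (- a - 1) * ((\<bar>x t\<bar> powr a - \<bar>y t\<bar>) * x t)))
      = ((a - 1) * y t) * r t"
  proof -
    define P where "P = x t powr a"
    have P: "P > 0" using \<open>x t > 0\<close> by (simp add: P_def)
    have e1: "x t powr (- a) = 1 / P" by (simp add: P_def powr_minus field_simps)
    have e2: "x t powr (- a - 1) = 1 / (P * x t)"
      using \<open>x t > 0\<close> by (simp add: P_def powr_diff powr_minus field_simps)
    show ?thesis
      unfolding r_eq separatrix_coeff_def e1 e2 using \<open>x t > 0\<close> \<open>y t > 0\<close> P \<open>a > 1\<close>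
      by (simp add: P_def[symmetric] field_simps)
  qed
  ultimately show ?thesis by (metis y_def)
qed

text \<open>With \<open>w = separatrix_coeff a\<close>, the quantity \<open>r = w - y x\<^sup>-\<^sup>a\<close> satisfies \<open>r' = (a - 1) y r\<close>.
  Below the separatrix \<open>r > 0\<close>, so by the lower bound on \<open>y\<close> it grows at least like
  \<open>(1 + y\<^sub>0 t)\<^sup>a\<^sup>-\<^sup>1\<close>; but \<open>r \<le> w\<close>.\<close>
lemma field_a_no_global_solution_below_separatrix:
  assumes "a > 1" "x0 > 0" "y0 > 0" and below: "y0 < separatrix_coeff a * x0 powr a"
  shows "\<not> fwd_solution (field_a a) (x0, y0) \<phi>"
proof
  assume sol: "fwd_solution (field_a a) (x0, y0) \<phi>"
  define w where "w = separatrix_coeff a"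
  define x where "x t = fst (\<phi> t)" for t
  define y where "y t = snd (\<phi> t)" for t
  define r where "r t = w - y t * x t powr (- a)" for t
  have init: "x 0 = x0" "y 0 = y0" using sol by (auto simp: x_def y_def fwd_solution_def)
  have x_pos: "x t > 0" and y_pos: "y t > 0" if "t \<ge> 0" for t
    using field_a_solution_signs(1,2)[OF sol _ that] assms by (auto simp: x_def y_def)
  have "r = (\<lambda>t. separatrix_coeff a - snd (\<phi> t) * fst (\<phi> t) powr (- a))"
    by (simp add: fun_eq_iff r_def w_def x_def y_def)
  then have r_deriv: "(r has_real_derivative ((a - 1) * y t) * r t) (at t within {0..})"
    if "t \<ge> 0" for t
    using field_a_separatrix_gap_deriv[OF sol \<open>a > 1\<close> that] x_pos[OF that] y_pos[OF that]
    by (simp add: x_def y_def)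
  have "continuous_on {0..} (\<lambda>t. (a - 1) * y t)"
    using fwd_solution_continuous_on[OF sol] unfolding y_def by (intro continuous_intros)
  moreover have "r 0 > 0"
    using below \<open>x0 > 0\<close> init by (simp add: r_def w_def powr_minus field_simps)
  ultimately have r_pos: "r t > 0" if "t \<ge> 0" for t
    using linear_ode_solution_eq[OF r_deriv _ that] by simp
  have r_le: "r t \<le> w" if "t \<ge> 0" for t
    using x_pos[OF that] y_pos[OF that] by (simp add: r_def)
  have growth: "ln (r 0) - (a - 1) * ln (1 + y0 * 0) \<le> ln (r t) - (a - 1) * ln (1 + y0 * t)"
    if t: "t \<ge> 0" for t
  proof (rule has_real_derivative_nonneg_imp_mono_on_nonneg[OF _ _ order_refl t])
    fix s :: real assume s: "s \<ge> 0"
    have "1 + y0 * s > 0" using \<open>y0 > 0\<close> s by (simp add: add_pos_nonneg)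
    then show "((\<lambda>t. ln (r t) - (a - 1) * ln (1 + y0 * t)) has_real_derivative
        1 / r s * (((a - 1) * y s) * r s) - (a - 1) * (1 / (1 + y0 * s) * y0)) (at s within {0..})"
      using r_deriv[OF s] r_pos[OF s] by (auto intro!: derivative_eq_intros)
    have "y0 / (1 + y0 * s) \<le> y s"
      using field_a_snd_lower_bound[OF sol _ \<open>y0 > 0\<close> s] \<open>a > 1\<close> by (simp add: y_def)
    moreover have "1 / r s * (((a - 1) * y s) * r s) - (a - 1) * (1 / (1 + y0 * s) * y0)
        = (a - 1) * (y s - y0 / (1 + y0 * s))"
      using r_pos[OF s] by (simp add: algebra_simps)
    ultimately show "1 / r s * (((a - 1) * y s) * r s) - (a - 1) * (1 / (1 + y0 * s) * y0) \<ge> 0"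
      using \<open>a > 1\<close> by simp
  qed
  define t1 where "t1 = exp ((ln w - ln (r 0)) / (a - 1)) / y0"
  have t1: "t1 \<ge> 0" using \<open>y0 > 0\<close> by (simp add: t1_def)
  have "ln (1 + y0 * t1) > (ln w - ln (r 0)) / (a - 1)"
  proof -
    have "1 + y0 * t1 > exp ((ln w - ln (r 0)) / (a - 1))"
      using \<open>y0 > 0\<close> by (simp add: t1_def)
    then show ?thesis by (metis exp_gt_zero exp_less_cancel_iff exp_ln less_trans)
  qed
  then have "(a - 1) * ln (1 + y0 * t1) > ln w - ln (r 0)"
    using \<open>a > 1\<close> by (simp add: field_simps)
  moreover have "ln (r t1) \<le> ln w" using r_pos[OF t1] r_le[OF t1] by simp
  moreover have "ln (r 0) \<le> ln (r t1) - (a - 1) * ln (1 + y0 * t1)" using growth[OF t1] by simp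
  ultimately show False by linarith
qed

lemma field_a_no_global_solution_in_cusp:
  assumes "a > 1" and cusp: "\<bar>y0\<bar> < separatrix_coeff a * \<bar>x0\<bar> powr a"
  shows "\<not> fwd_solution (field_a a) (x0, y0) \<phi>"
proof
  assume sol: "fwd_solution (field_a a) (x0, y0) \<phi>"
  have "x0 \<noteq> 0" using cusp by (cases "x0 = 0") auto
  define s1 where "s1 = sgn x0"
  define s2 where "s2 = (if y0 = 0 then 1 else sgn y0)"
  have "\<bar>s1\<bar> = 1" "\<bar>s2\<bar> = 1" using \<open>x0 \<noteq> 0\<close> by (auto simp: s1_def s2_def abs_sgn_eq)
  moreover have "s1 * x0 = \<bar>x0\<bar>" "s2 * y0 = \<bar>y0\<bar>" by (auto simp: s1_def s2_def sgn_if)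
  ultimately have "fwd_solution (field_a a) (\<bar>x0\<bar>, \<bar>y0\<bar>) (\<lambda>t. (s1 * fst (\<phi> t), s2 * snd (\<phi> t)))"
    using fwd_solution_field_a_reflect[OF sol] by metis
  moreover have "\<bar>x0\<bar> > 0" using \<open>x0 \<noteq> 0\<close> by simp
  ultimately show False
    using field_a_no_global_solution_on_x_axis field_a_no_global_solution_below_separatrix
      \<open>a > 1\<close> cusp
    by (cases "y0 = 0") fastforce+
qed

lemma field_a_converging_solution_on_y_axis:
  "\<exists>\<phi>. fwd_solution (field_a a) (0, y0) \<phi> \<and> (\<phi> \<longlongrightarrow> 0) at_top"
proof (intro exI conjI)
  show "fwd_solution (field_a a) (0, y0) (\<lambda>t. (0, y0 / (1 + \<bar>y0\<bar> * t)))"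
  proof (rule fwd_solution_PairI)
    fix t :: real assume t: "t \<ge> 0"
    have "1 + \<bar>y0\<bar> * t > 0" using t by (simp add: add_pos_nonneg)
    then show "((\<lambda>t. y0 / (1 + \<bar>y0\<bar> * t)) has_real_derivative
        snd (field_a a (0, y0 / (1 + \<bar>y0\<bar> * t)))) (at t within {0..})"
      by (auto intro!: derivative_eq_intros simp: field_a_def abs_divide power2_eq_square field_simps)
  qed (simp_all add: field_a_def)
  show "((\<lambda>t. (0, y0 / (1 + \<bar>y0\<bar> * t))) \<longlongrightarrow> 0) at_top"
  proof (cases "y0 = 0")
    case False
    then have "((\<lambda>t. y0 / (1 + \<bar>y0\<bar> * t)) \<longlongrightarrow> 0) at_top"
      by (intro tendsto_divide_0[OF tendsto_const] filterlim_at_top_imp_at_infinity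
          filterlim_affine_at_top) simp
    then show ?thesis unfolding zero_prod_def by (intro tendsto_Pair tendsto_const)
  qed (simp add: zero_prod_def)
qed

lemma field_a_converging_solution_on_separatrix:
  assumes "a > 1" "x0 > 0"
  shows "\<exists>\<phi>. fwd_solution (field_a a) (x0, separatrix_coeff a * x0 powr a) \<phi> \<and> (\<phi> \<longlongrightarrow> 0) at_top"
proof -
  define w where "w = separatrix_coeff a"
  define k where "k = 1 / (2 * (a - 1))"
  have "w > 0" "k > 0" using \<open>a > 1\<close> by (simp_all add: w_def k_def separatrix_coeff_def)
  define z where "z t = x0 powr (- a) + a * k * t" for t
  have z_pos: "z t > 0" if "t \<ge> 0" for t
    unfolding z_def using \<open>a > 1\<close> \<open>k > 0\<close> that \<open>x0 > 0\<close> by (intro add_pos_nonneg) auto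
  have z_lim: "filterlim z at_top at_top"
    unfolding z_def[abs_def] using \<open>a > 1\<close> \<open>k > 0\<close> by (intro filterlim_affine_at_top) simp
  have "fwd_solution (field_a a) (x0, w * x0 powr a) (\<lambda>t. (z t powr (- 1 / a), w / z t))"
  proof (rule fwd_solution_PairI)
    show "z 0 powr (- 1 / a) = x0" using \<open>a > 1\<close> \<open>x0 > 0\<close> by (simp add: z_def powr_powr)
    show "w / z 0 = w * x0 powr a" using \<open>x0 > 0\<close> by (simp add: z_def powr_minus divide_inverse)
  next
    fix t :: real assume t: "t \<ge> 0"
    have zp: "z t > 0" using z_pos[OF t] .
    have dz: "(z has_real_derivative a * k) (at t within {0..})"
      unfolding z_def by (auto intro!: derivative_eq_intros)
    have x_pow: "\<bar>z t powr (- 1 / a)\<bar> powr a = 1 / z t"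
    proof -
      have "(z t powr (- 1 / a)) powr a = z t powr ((- 1 / a) * a)" by (simp add: powr_powr)
      also have "(- 1 / a) * a = -1" using \<open>a > 1\<close> by simp
      finally show ?thesis using zp by (simp add: powr_minus divide_inverse)
    qed
    have "((\<lambda>t. z t powr (- 1 / a)) has_real_derivative (- 1 / a) * z t powr (- 1 / a - 1) * (a * k))
        (at t within {0..})"
      using DERIV_chain2[where f="\<lambda>z. z powr (- 1 / a)" and g=z, OF has_real_derivative_powr[OF zp] dz]
      by simp
    moreover have "(- 1 / a) * z t powr (- 1 / a - 1) * (a * k)
        = z t powr (- 1 / a) * (1 / z t - \<bar>w / z t\<bar>)"
    proof -
      have h: "z t powr (- 1 / a - 1) = z t powr (- 1 / a) / z t" using zp by (simp add: powr_diff)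
      define P where "P = z t powr (- 1 / a)"
      have "(- 1 / a) * (P / z t) * (a * k) = P * (1 / z t - \<bar>w / z t\<bar>)"
        using zp \<open>a > 1\<close> \<open>w > 0\<close> by (simp add: w_def separatrix_coeff_def k_def abs_divide field_simps)
      then show ?thesis unfolding h P_def .
    qed
    ultimately show "((\<lambda>t. z t powr (- 1 / a)) has_real_derivative
        fst (field_a a (z t powr (- 1 / a), w / z t))) (at t within {0..})"
      unfolding field_a_Pair fst_conv x_pow by metis
    have "((\<lambda>t. w / z t) has_real_derivative - (w * (a * k)) / (z t)\<^sup>2) (at t within {0..})"
      using dz zp by (auto intro!: derivative_eq_intros simp: power2_eq_square field_simps)
    moreover have "- (w * (a * k)) / (z t)\<^sup>2 = w / z t * ((1/2) * (1 / z t) - \<bar>w / z t\<bar>)"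
      using zp \<open>a > 1\<close> \<open>w > 0\<close>
      by (simp add: w_def separatrix_coeff_def k_def abs_divide power2_eq_square field_simps)
    ultimately show "((\<lambda>t. w / z t) has_real_derivative
        snd (field_a a (z t powr (- 1 / a), w / z t))) (at t within {0..})"
      unfolding field_a_Pair snd_conv x_pow by metis
  qed
  moreover have "((\<lambda>t. (z t powr (- 1 / a), w / z t)) \<longlongrightarrow> (0, 0)) at_top"
    using \<open>a > 1\<close> z_lim
    by (intro tendsto_Pair tendsto_neg_powr tendsto_divide_0[OF tendsto_const]
        filterlim_at_top_imp_at_infinity) simp_all
  ultimately show ?thesis unfolding w_def zero_prod_def by blast
qed

text \<open>Above the separatrix the orbit is parametrised by the excess \<open>u = y x\<^sup>-\<^sup>a - w\<close> of the ratio
  \<open>y/x\<^sup>a\<close> over \<open>w = separatrix_coeff a\<close>: along solutions \<open>u' = (a - 1) y u\<close>, and \<open>dy/du\<close> is a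
  separable equation solved by \<open>Y\<close> below, with \<open>x\<^sup>a = Y u / (u + w)\<close>.  Running the parameter
  at speed \<open>(a - 1) Y u u\<close> turns this curve into a solution tending to the origin.\<close>
locale field_a_above_separatrix =
  fixes a x0 y0 :: real
  assumes a: "a > 1" and x0: "x0 > 0" and above: "y0 > separatrix_coeff a * x0 powr a"
begin

abbreviation "w \<equiv> separatrix_coeff a"

definition "u0 = y0 * x0 powr (- a) - w"
definition "\<alpha> = 1 / (2 * a - 1)"
definition "\<beta> = a / ((a - 1) * (2 * a - 1))"
definition "K = y0 * (u0 + w) powr \<alpha> * u0 powr \<beta>"
definition "Y u = K * (u + w) powr (- \<alpha>) * u powr (- \<beta>)"
definition "X u = (Y u / (u + w)) powr (1 / a)"
definition "speed u = (a - 1) * Y u * u"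
definition "Y' u = Y u * (- \<alpha> / (u + w) - \<beta> / u)"
definition "X' u = (1 / a) * X u * (Y' u / Y u - 1 / (u + w))"

lemma w_pos: "w > 0"
  using a by (rule separatrix_coeff_pos)

lemma u0_pos: "u0 > 0"
proof -
  have "x0 powr a * x0 powr (- a) = 1" using x0 by (simp add: powr_minus)
  then have "w = w * x0 powr a * x0 powr (- a)" by (simp add: mult.assoc)
  also have "\<dots> < y0 * x0 powr (- a)" using above x0 by simp
  finally show ?thesis by (simp add: u0_def)
qed

lemma y0_pos: "y0 > 0"
proof -
  have "w * x0 powr a > 0" using w_pos x0 by simp
  then show ?thesis using above by linarith
qed

lemma exponents_pos: "\<alpha> > 0" "\<beta> > 0"
  using a by (simp_all add: \<alpha>_def \<beta>_def)

lemma Y_pos: "u > 0 \<Longrightarrow> Y u > 0"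
  using y0_pos u0_pos w_pos by (simp add: Y_def K_def)

lemma speed_pos: "u > 0 \<Longrightarrow> speed u > 0"
  using Y_pos a by (simp add: speed_def)

lemma Y_u0: "Y u0 = y0"
proof -
  have "Y u0 = y0 * ((u0 + w) powr \<alpha> * (u0 + w) powr (- \<alpha>)) * (u0 powr \<beta> * u0 powr (- \<beta>))"
    by (simp add: Y_def K_def mult_ac)
  also have "\<dots> = y0" using u0_pos w_pos by (simp add: powr_minus)
  finally show ?thesis .
qed

lemma X_u0: "X u0 = x0"
proof -
  have "y0 / (u0 + w) = x0 powr a" using x0 y0_pos by (simp add: u0_def powr_minus field_simps)
  then have "X u0 = (x0 powr a) powr (1 / a)" by (simp add: X_def Y_u0)
  also have "\<dots> = x0" using a x0 by (simp add: powr_powr)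
  finally show ?thesis .
qed

lemma X_pow: "u > 0 \<Longrightarrow> \<bar>X u\<bar> powr a = Y u / (u + w)"
proof -
  assume u: "u > 0"
  have "\<bar>X u\<bar> powr a = (Y u / (u + w)) powr ((1 / a) * a)"
    by (simp add: X_def powr_powr)
  also have "(1 / a) * a = 1" using a by simp
  finally show ?thesis using Y_pos[OF u] w_pos u by simp
qed

lemma Y_deriv: "u > 0 \<Longrightarrow> (Y has_real_derivative Y' u) (at u)"
proof -
  assume u: "u > 0"
  have "u + w > 0" using u w_pos by simp
  then have "(Y has_real_derivative K * ((- \<alpha>) * (u + w) powr (- \<alpha> - 1)) * u powr (- \<beta>)
      + K * (u + w) powr (- \<alpha>) * ((- \<beta>) * u powr (- \<beta> - 1))) (at u)"
    unfolding Y_def[abs_def] using u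
    by (auto intro!: derivative_eq_intros DERIV_fun_powr[THEN DERIV_cong] simp: algebra_simps)
  moreover have "K * ((- \<alpha>) * (u + w) powr (- \<alpha> - 1)) * u powr (- \<beta>)
      + K * (u + w) powr (- \<alpha>) * ((- \<beta>) * u powr (- \<beta> - 1)) = Y' u"
    using u \<open>u + w > 0\<close> by (simp add: Y'_def Y_def powr_diff field_simps)
  ultimately show ?thesis by metis
qed

lemma X_deriv: "u > 0 \<Longrightarrow> (X has_real_derivative X' u) (at u)"
proof -
  assume u: "u > 0"
  define q where "q = u + w"
  have q: "q > 0" using u w_pos by (simp add: q_def)
  have ratio_pos: "Y u / q > 0" using Y_pos[OF u] q by simp
  have "((\<lambda>u. Y u / (u + w)) has_real_derivative (Y' u * q - Y u * 1) / (q * q)) (at u)"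
    unfolding q_def using Y_deriv[OF u] u w_pos by (intro DERIV_divide) (auto intro!: derivative_eq_intros)
  from DERIV_fun_powr[OF this, of "1 / a"]
  have "(X has_real_derivative
      (1 / a) * (Y u / q) powr (1 / a - 1) * ((Y' u * q - Y u * 1) / (q * q))) (at u)"
    using ratio_pos by (simp add: X_def[abs_def] q_def)
  moreover have "(Y u / q) powr (1 / a - 1) = X u / (Y u / q)"
    using ratio_pos Y_pos[OF u] q by (simp add: X_def q_def powr_diff)
  moreover have "(1 / a) * (X u / (Y u / q)) * ((Y' u * q - Y u * 1) / (q * q)) = X' u"
  proof -
    have "(1 / k) * (P / (Yv / q)) * ((D * q - Yv * 1) / (q * q)) = (1 / k) * P * (D / Yv - 1 / q)"
      if "Yv > 0" "k \<noteq> 0" for k P D Yv :: real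
      using that q by (simp add: field_simps)
    from this[OF Y_pos[OF u], of a "X u" "Y' u"] show ?thesis
      using a by (simp add: X'_def q_def)
  qed
  ultimately show ?thesis by metis
qed

lemma exponent_identity:
  assumes u: "u > 0"
  shows "(a - 1) * (- \<alpha> * u / (u + w) - \<beta>) = 1 / (2 * (u + w)) - 1"
proof -
  define q where "q = u + w"
  have q: "q > 0" using u w_pos by (simp add: q_def)
  define A where "A = (a - 1) * \<alpha>"
  have "a - 1 \<noteq> 0" "2 * a - 1 \<noteq> 0" using a by simp_all
  then have "(a - 1) * \<beta> = a / (2 * a - 1)" "A = (a - 1) / (2 * a - 1)"
    by (simp_all add: A_def \<alpha>_def \<beta>_def)
  moreover have "1 - (a - 1) / (2 * a - 1) = a / (2 * a - 1)"
    using \<open>2 * a - 1 \<noteq> 0\<close> by (simp add: field_simps)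
  moreover have "(a - 1) / (2 * a - 1) * w = (a - 1/2) / (2 * a - 1)"
    using \<open>a - 1 \<noteq> 0\<close> by (simp add: separatrix_coeff_def)
  moreover have "(a - 1/2) / (2 * a - 1) = 1/2"
    using \<open>2 * a - 1 \<noteq> 0\<close> by (simp add: field_simps)
  ultimately have B: "(a - 1) * \<beta> = 1 - A" and Aw: "A * w = 1/2" by simp_all
  have "(a - 1) * (- \<alpha> * u / q - \<beta>) = (- A * u - (a - 1) * \<beta> * q) / q"
    using q by (simp add: A_def field_simps)
  also have "\<dots> = (- A * u - (1 - A) * q) / q" by (simp add: B)
  also have "- A * u - (1 - A) * q = A * w - q" by (simp add: q_def algebra_simps)
  also have "(A * w - q) / q = 1 / (2 * q) - 1" using q by (simp add: Aw field_simps)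
  finally show ?thesis by (simp add: q_def)
qed

lemma Y_ode: "u > 0 \<Longrightarrow> speed u * Y' u = Y u * ((1/2) * \<bar>X u\<bar> powr a - \<bar>Y u\<bar>)"
proof -
  assume u: "u > 0"
  have "speed u * Y' u = Y u * Y u * ((a - 1) * (- \<alpha> * u / (u + w) - \<beta>))"
    using u by (simp add: speed_def Y'_def algebra_simps diff_divide_distrib)
  also have "\<dots> = Y u * ((1/2) * \<bar>X u\<bar> powr a - \<bar>Y u\<bar>)"
    unfolding exponent_identity[OF u] X_pow[OF u] using Y_pos[OF u] u w_pos
    by (simp add: field_simps)
  finally show ?thesis .
qed

lemma X_ode: "u > 0 \<Longrightarrow> speed u * X' u = X u * (\<bar>X u\<bar> powr a - \<bar>Y u\<bar>)"
proof -
  assume u: "u > 0"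
  define q where "q = u + w"
  have q: "q > 0" using u w_pos by (simp add: q_def)
  have "Y u \<noteq> 0" "a \<noteq> 0" using Y_pos[OF u] a by simp_all
  then have "speed u * X' u = X u * Y u / a * ((a - 1) * (- \<alpha> * u / q - \<beta>) - (a - 1) * u / q)"
    using u q by (simp add: speed_def X'_def Y'_def q_def[symmetric] field_simps)
  also have "(a - 1) * (- \<alpha> * u / q - \<beta>) - (a - 1) * u / q
      = 1 / (2 * q) - 1 - ((a - 1) * q - (a - 1/2)) / q"
  proof -
    have "(a - 1) * u = (a - 1) * q - (a - 1) * w" by (simp add: q_def algebra_simps)
    also have "(a - 1) * w = a - 1/2" using a by (simp add: separatrix_coeff_def)
    finally show ?thesis using exponent_identity[OF u] by (simp add: q_def)
  qed
  also have "\<dots> = a * (1 / q - 1)" using q by (simp add: field_simps)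
  also have "X u * Y u / a * (a * (1 / q - 1)) = X u * (\<bar>X u\<bar> powr a - \<bar>Y u\<bar>)"
    unfolding X_pow[OF u] q_def[symmetric] using Y_pos[OF u] q a by (simp add: field_simps)
  finally show ?thesis .
qed

lemma filterlim_add_w_at_top: "filterlim (\<lambda>u. u + w) at_top at_top"
  using filterlim_tendsto_add_at_top[OF tendsto_const[of w] filterlim_ident] by (simp add: add.commute)

lemma Y_tendsto_0: "(Y \<longlongrightarrow> 0) at_top"
proof -
  have "((\<lambda>u. (u + w) powr (- \<alpha>)) \<longlongrightarrow> 0) at_top"
    by (rule tendsto_neg_powr[OF _ filterlim_add_w_at_top]) (use exponents_pos in simp)
  moreover have "((\<lambda>u. u powr (- \<beta>)) \<longlongrightarrow> 0) at_top"
    by (rule tendsto_neg_powr[OF _ filterlim_ident]) (use exponents_pos in simp)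
  ultimately have "((\<lambda>u. K * (u + w) powr (- \<alpha>) * u powr (- \<beta>)) \<longlongrightarrow> K * 0 * 0) at_top"
    by (intro tendsto_mult tendsto_const)
  then show ?thesis by (simp add: Y_def[abs_def])
qed

lemma X_tendsto_0: "(X \<longlongrightarrow> 0) at_top"
proof -
  have "((\<lambda>u. Y u / (u + w)) \<longlongrightarrow> 0) at_top"
    by (rule tendsto_divide_0[OF Y_tendsto_0 filterlim_at_top_imp_at_infinity[OF filterlim_add_w_at_top]])
  moreover have "\<forall>\<^sub>F u in at_top. 0 \<le> Y u / (u + w)"
  proof (rule eventually_at_top_linorderI[of 1])
    fix u :: real assume "u \<ge> 1"
    then show "0 \<le> Y u / (u + w)" using Y_pos[of u] w_pos by simp
  qed
  ultimately have "((\<lambda>u. (Y u / (u + w)) powr (1 / a)) \<longlongrightarrow> 0) at_top"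
    by (rule tendsto_zero_powrI[OF _ tendsto_const]) (use a in simp)
  then show ?thesis by (simp add: X_def[abs_def])
qed

lemma speed_continuous: "continuous_on {0<..} speed"
proof (rule continuous_at_imp_continuous_on, rule ballI)
  fix u :: real assume "u \<in> {0<..}"
  then have "isCont Y u" using DERIV_isCont[OF Y_deriv] by simp
  then show "isCont speed u" unfolding speed_def[abs_def] by (intro continuous_intros)
qed

text \<open>The bound \<open>(1/y)' \<le> 1\<close> along the orbit, read in the parameter \<open>u\<close>: \<open>(1/Y)' \<le> 1/speed\<close>.\<close>
lemma travel_time_lower_bound:
  assumes "u \<ge> u0"
  shows "integral {u0..u} (\<lambda>v. 1 / speed v) \<ge> 1 / Y u - 1 / y0"
proof -
  have v_pos: "v > 0" if "v \<in> {u0..u}" for v using that u0_pos by auto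
  have "((\<lambda>v. - Y' v / (Y v)\<^sup>2) has_integral (1 / Y u - 1 / Y u0)) {u0..u}"
  proof (rule fundamental_theorem_of_calculus[OF assms])
    fix v assume "v \<in> {u0..u}"
    then have "((\<lambda>v. 1 / Y v) has_real_derivative - Y' v / (Y v)\<^sup>2) (at v)"
      using Y_deriv[of v] Y_pos[of v] v_pos
      by (auto intro!: derivative_eq_intros simp: power2_eq_square)
    then show "((\<lambda>v. 1 / Y v) has_vector_derivative - Y' v / (Y v)\<^sup>2) (at v within {u0..u})"
      by (simp add: has_real_derivative_iff_has_vector_derivative has_vector_derivative_at_within)
  qed
  moreover have "continuous_on {u0..u} (\<lambda>v. 1 / speed v)"
  proof (rule continuous_on_divide[OF continuous_on_const continuous_on_subset[OF speed_continuous]])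
    show "{u0..u} \<subseteq> {0<..}" using v_pos by auto
    show "\<forall>v\<in>{u0..u}. speed v \<noteq> 0" using v_pos speed_pos by (metis less_irrefl)
  qed
  then have "((\<lambda>v. 1 / speed v) has_integral integral {u0..u} (\<lambda>v. 1 / speed v)) {u0..u}"
    by (intro integrable_integral integrable_continuous_real)
  moreover have "- Y' v / (Y v)\<^sup>2 \<le> 1 / speed v" if v: "v \<in> {u0..u}" for v
  proof -
    have v: "v > 0" using v_pos[OF v] .
    have "Y v \<noteq> 0" "v + w \<noteq> 0" using Y_pos[OF v] v w_pos by simp_all
    define c where "c = - \<alpha> / (v + w) - \<beta> / v"
    have "Y' v = Y v * c" by (simp add: Y'_def c_def)
    then have "speed v * (- Y' v / (Y v)\<^sup>2) = - ((a - 1) * (v * c))"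
      using \<open>Y v \<noteq> 0\<close> by (simp add: speed_def power2_eq_square field_simps)
    also have "- ((a - 1) * (v * c)) = - ((a - 1) * (- \<alpha> * v / (v + w) - \<beta>))"
      using v by (simp add: c_def right_diff_distrib ac_simps)
    also have "\<dots> = 1 - 1 / (2 * (v + w))" unfolding exponent_identity[OF v] by simp
    also have "\<dots> \<le> 1" using v w_pos by simp
    finally show ?thesis using speed_pos[OF v] by (simp add: field_simps)
  qed
  ultimately show ?thesis using Y_u0 by (auto intro: has_integral_le)
qed

lemma travel_time_unbounded: "filterlim (\<lambda>u. integral {u0..u} (\<lambda>v. 1 / speed v)) at_top at_top"
proof (rule filterlim_at_top_mono)
  have "filterlim (\<lambda>u. inverse (Y u)) at_top at_top"
    using Y_pos by (intro filterlim_inverse_at_top[OF Y_tendsto_0] eventually_at_top_linorderI[of 1]) auto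
  from filterlim_tendsto_add_at_top[OF tendsto_const this]
  show "filterlim (\<lambda>u. - (1 / y0) + inverse (Y u)) at_top at_top" .
  show "\<forall>\<^sub>F u in at_top. - (1 / y0) + inverse (Y u) \<le> integral {u0..u} (\<lambda>v. 1 / speed v)"
    using travel_time_lower_bound
    by (intro eventually_at_top_linorderI[of u0]) (simp add: inverse_eq_divide)
qed

theorem converging_solution: "\<exists>\<phi>. fwd_solution (field_a a) (x0, y0) \<phi> \<and> (\<phi> \<longlongrightarrow> 0) at_top"
proof -
  obtain \<tau> where \<tau>0: "\<tau> 0 = u0" and \<tau>_ge: "\<And>t. t \<ge> 0 \<Longrightarrow> \<tau> t \<ge> u0"
    and \<tau>_deriv: "\<And>t. t \<ge> 0 \<Longrightarrow> (\<tau> has_real_derivative speed (\<tau> t)) (at t)"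
    and \<tau>_lim: "filterlim \<tau> at_top at_top"
    using autonomous_scalar_ode_solution[OF speed_continuous speed_pos u0_pos travel_time_unbounded]
    by blast
  have \<tau>_pos: "\<tau> t > 0" if "t \<ge> 0" for t using \<tau>_ge[OF that] u0_pos by simp
  define \<Psi> where "\<Psi> u = (X u, Y u)" for u
  have "fwd_solution (field_a a) (x0, y0) (\<Psi> \<circ> \<tau>)"
  proof (rule fwd_solution_time_change[where g=speed and \<Psi>'="\<lambda>u. (X' u, Y' u)"])
    show "\<tau> 0 = u0" "\<Psi> u0 = (x0, y0)" using \<tau>0 by (simp_all add: \<Psi>_def X_u0 Y_u0)
  next
    fix t :: real assume t: "t \<ge> 0"
    show "(\<tau> has_real_derivative speed (\<tau> t)) (at t within {0..})"
      using \<tau>_deriv[OF t] by (rule has_field_derivative_at_within)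
    show "(\<Psi> has_vector_derivative (X' (\<tau> t), Y' (\<tau> t))) (at (\<tau> t))"
      unfolding \<Psi>_def[abs_def] using X_deriv[OF \<tau>_pos[OF t]] Y_deriv[OF \<tau>_pos[OF t]]
      by (intro has_vector_derivative_Pair) (simp_all add: has_real_derivative_iff_has_vector_derivative)
    show "speed (\<tau> t) *\<^sub>R (X' (\<tau> t), Y' (\<tau> t)) = field_a a (\<Psi> (\<tau> t))"
      using X_ode[OF \<tau>_pos[OF t]] Y_ode[OF \<tau>_pos[OF t]] by (simp add: \<Psi>_def field_a_Pair)
  qed
  moreover have "((\<Psi> \<circ> \<tau>) \<longlongrightarrow> (0, 0)) at_top"
    unfolding \<Psi>_def comp_def
    by (intro tendsto_Pair filterlim_compose[OF X_tendsto_0 \<tau>_lim] filterlim_compose[OF Y_tendsto_0 \<tau>_lim])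
  ultimately show ?thesis by (auto simp: zero_prod_def)
qed

end

section \<open>The basin of attraction and its density\<close>

definition cusp :: "real \<Rightarrow> real \<Rightarrow> (real \<times> real) set" where
  "cusp c a = {p. \<bar>snd p\<bar> < c * \<bar>fst p\<bar> powr a}"

lemma open_cusp: "a > 0 \<Longrightarrow> open (cusp c a)"
  unfolding cusp_def
  by (intro open_Collect_less continuous_intros continuous_on_powr') auto

lemma lmeasurable_ball_Int_cusp: "a > 0 \<Longrightarrow> ball 0 r \<inter> cusp c a \<in> lmeasurable"
  by (intro lmeasurable_open bounded_Int open_Int open_cusp) auto

lemma measure_ball_cusp_upper:
  assumes "c \<ge> 0" "a > 0" "r > 0"
  shows "measure lebesgue (ball 0 r \<inter> cusp c a) \<le> 4 * c * r powr (a + 1)"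
proof -
  define h where "h = c * r powr a"
  have "h \<ge> 0" using assms by (simp add: h_def)
  have "ball 0 r \<inter> cusp c a \<subseteq> cbox (- r, - h) (r, h)"
  proof
    fix p :: "real \<times> real" assume p: "p \<in> ball 0 r \<inter> cusp c a"
    obtain x y where xy: "p = (x, y)" by fastforce
    have "norm x \<le> norm (x, y)" by (rule norm_fst_le)
    then have "\<bar>x\<bar> < r" using p xy by simp
    moreover have "\<bar>y\<bar> < c * \<bar>x\<bar> powr a" using p xy by (simp add: cusp_def)
    moreover have "c * \<bar>x\<bar> powr a \<le> h"
      unfolding h_def using \<open>\<bar>x\<bar> < r\<close> assms by (intro mult_left_mono powr_mono2) auto
    ultimately show "p \<in> cbox (- r, - h) (r, h)" using xy by (auto simp: cbox_Pair_iff)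
  qed
  then have "measure lebesgue (ball 0 r \<inter> cusp c a) \<le> measure lebesgue (cbox (- r, - h) (r, h))"
    using lmeasurable_ball_Int_cusp[OF \<open>a > 0\<close>] by (intro measure_mono_fmeasurable) auto
  also have "\<dots> = (r - - r) * (h - - h)"
    using \<open>r > 0\<close> \<open>h \<ge> 0\<close> by (simp add: measure_completion content_Pair)
  also have "\<dots> = 4 * c * (r * r powr a)" by (simp add: h_def)
  also have "r * r powr a = r powr (a + 1)" using \<open>r > 0\<close> by (simp add: powr_add)
  finally show ?thesis by simp
qed

text \<open>For small \<open>r\<close> the cusp contains the box \<open>[r/4, r/2] \<times> [-h/2, h/2]\<close> with \<open>h = c (r/4)\<^sup>a\<close>,
  which lies in the ball once \<open>h \<le> r/2\<close>; this needs \<open>a > 1\<close>.\<close>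
lemma measure_ball_cusp_lower:
  assumes "c > 0" "a > 1"
  shows "\<forall>\<^sub>F r in at_right 0.
    c / 4 powr (a + 1) * r powr (a + 1) \<le> measure lebesgue (ball 0 r \<inter> cusp c a)"
proof -
  have "((\<lambda>r. c * (r / 4) powr (a - 1)) \<longlongrightarrow> c * 0) (at_right 0)"
  proof (intro tendsto_mult tendsto_const tendsto_zero_powrI)
    show "((\<lambda>r::real. r / 4) \<longlongrightarrow> 0) (at_right 0)"
      by (auto intro!: tendsto_eq_intros)
    show "\<forall>\<^sub>F r in at_right 0. 0 \<le> r / (4::real)"
      using eventually_at_right_less[of "0::real"] by eventually_elim simp
  qed (use \<open>a > 1\<close> in auto)
  then have "\<forall>\<^sub>F r in at_right 0. c * (r / 4) powr (a - 1) < 2"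
    by (intro order_tendstoD(2)) auto
  with eventually_at_right_less[of "0::real"] show ?thesis
  proof eventually_elim
    case (elim r)
    then have "r > 0" and small: "c * (r / 4) powr (a - 1) < 2" by auto
    define h where "h = c * (r / 4) powr a"
    have "h > 0" using \<open>c > 0\<close> \<open>r > 0\<close> by (simp add: h_def)
    have "h = c * (r / 4) powr (a - 1) * (r / 4)"
      using \<open>r > 0\<close> by (simp add: h_def powr_diff mult.assoc)
    also have "\<dots> \<le> 2 * (r / 4)" using small \<open>r > 0\<close> by (intro mult_right_mono) auto
    finally have "h \<le> r / 2" by simp
    have box: "cbox (r / 4, - h / 2) (r / 2, h / 2) \<subseteq> ball 0 r \<inter> cusp c a"
    proof
      fix p :: "real \<times> real" assume p: "p \<in> cbox (r / 4, - h / 2) (r / 2, h / 2)"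
      obtain x y where xy: "p = (x, y)" by fastforce
      have x: "r / 4 \<le> x" "x \<le> r / 2" and y: "\<bar>y\<bar> \<le> h / 2" using p xy by (auto simp: cbox_Pair_iff)
      have "norm (x, y) \<le> norm x + norm y" by (rule norm_Pair_le)
      also have "\<dots> < r" using x y \<open>h \<le> r / 2\<close> \<open>r > 0\<close> by simp
      finally have "p \<in> ball 0 r" using xy by (simp add: mem_ball_0)
      moreover have "\<bar>y\<bar> < h" using y \<open>h > 0\<close> by simp
      moreover have "h \<le> c * \<bar>x\<bar> powr a"
        unfolding h_def using x \<open>r > 0\<close> assms by (intro mult_left_mono powr_mono2) auto
      ultimately show "p \<in> ball 0 r \<inter> cusp c a" using xy by (simp add: cusp_def)
    qed
    have "c / 4 powr (a + 1) * r powr (a + 1) = c * ((r / 4) * (r / 4) powr a)"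
      using \<open>r > 0\<close> by (simp add: powr_add powr_divide ac_simps)
    also have "\<dots> = (r / 2 - r / 4) * (h / 2 - - h / 2)" by (simp add: h_def)
    also have "\<dots> = measure lebesgue (cbox (r / 4, - h / 2) (r / 2, h / 2))"
      using \<open>r > 0\<close> \<open>h > 0\<close> by (simp add: measure_completion content_Pair)
    also have "\<dots> \<le> measure lebesgue (ball 0 r \<inter> cusp c a)"
      using box lmeasurable_ball_Int_cusp[of a r c] \<open>a > 1\<close> by (intro measure_mono_fmeasurable) auto
    finally show ?case .
  qed
qed

lemma basin_field_a:
  assumes "a > 1"
  shows "basin (field_a a) {0} = - cusp (separatrix_coeff a) a"
proof
  show "basin (field_a a) {0} \<subseteq> - cusp (separatrix_coeff a) a"
    using field_a_no_global_solution_in_cusp[OF assms] by (force simp: basin_def cusp_def)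
  show "- cusp (separatrix_coeff a) a \<subseteq> basin (field_a a) {0}"
  proof
    fix p assume "p \<in> - cusp (separatrix_coeff a) a"
    then obtain x y where p: "p = (x, y)" and above: "separatrix_coeff a * \<bar>x\<bar> powr a \<le> \<bar>y\<bar>"
      by (cases p) (auto simp: cusp_def)
    have "\<exists>\<phi>. fwd_solution (field_a a) (x, y) \<phi> \<and> (\<phi> \<longlongrightarrow> 0) at_top"
    proof (cases "x = 0")
      case True
      then show ?thesis using field_a_converging_solution_on_y_axis by simp
    next
      case False
      then have "\<bar>x\<bar> > 0" by simp
      then have "separatrix_coeff a * \<bar>x\<bar> powr a > 0"
        using separatrix_coeff_pos[OF assms] by simp
      then have "y \<noteq> 0" using above by auto
      have "\<exists>\<phi>. fwd_solution (field_a a) (\<bar>x\<bar>, \<bar>y\<bar>) \<phi> \<and> (\<phi> \<longlongrightarrow> 0) at_top"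
      proof (cases "\<bar>y\<bar> = separatrix_coeff a * \<bar>x\<bar> powr a")
        case True
        then show ?thesis
          using field_a_converging_solution_on_separatrix[OF assms \<open>\<bar>x\<bar> > 0\<close>] by simp
      next
        case False
        then have "field_a_above_separatrix a \<bar>x\<bar> \<bar>y\<bar>"
          using above assms \<open>\<bar>x\<bar> > 0\<close> by unfold_locales auto
        then show ?thesis by (rule field_a_above_separatrix.converging_solution)
      qed
      from converging_field_a_solution_reflect[OF this, of "sgn x" "sgn y"]
      show ?thesis using \<open>x \<noteq> 0\<close> \<open>y \<noteq> 0\<close> by (simp add: abs_sgn_eq sgn_mult_abs)
    qed
    then show "p \<in> basin (field_a a) {0}" unfolding p by (auto intro: in_basin_if_tendsto)
  qed
qed

lemma basin_field_a_lebesgue: "a > 1 \<Longrightarrow> basin (field_a a) {0} \<in> sets lebesgue"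
  unfolding basin_field_a using open_cusp[of a]
  by (intro borel_closed sets_completionI_sets) (auto simp: closed_Compl)

lemma one_minus_Sigma_eps_basin_field_a:
  assumes "a > 1" "r > 0"
  shows "1 - Sigma_eps (basin (field_a a) {0}) 0 r
    = measure lebesgue (ball 0 r \<inter> cusp (separatrix_coeff a) a) / (pi * r\<^sup>2)"
proof -
  have "ball 0 r - basin (field_a a) {0} = ball 0 r \<inter> cusp (separatrix_coeff a) a"
    unfolding basin_field_a[OF \<open>a > 1\<close>] by blast
  moreover have "measure lebesgue (ball (0 :: real \<times> real) r) = pi * r\<^sup>2"
    using \<open>r > 0\<close> by (simp add: measure_completion content_ball unit_ball_vol_2 power2_eq_square)
  ultimately show ?thesis
    using one_minus_Sigma_eps[OF basin_field_a_lebesgue[OF \<open>a > 1\<close>] \<open>r > 0\<close>] by metis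
qed

lemma one_minus_Sigma_eps_basin_field_a_bounds:
  assumes "a > 1"
  defines "w \<equiv> separatrix_coeff a"
  shows "\<forall>\<^sub>F r in at_right 0.
    w / 4 powr (a + 1) / pi * r powr (a - 1) \<le> 1 - Sigma_eps (basin (field_a a) {0}) 0 r \<and>
    1 - Sigma_eps (basin (field_a a) {0}) 0 r \<le> 4 * w / pi * r powr (a - 1)"
proof -
  have "w > 0" using separatrix_coeff_pos[OF assms(1)] by (simp add: w_def)
  show ?thesis
    using eventually_at_right_less[of "0::real"] measure_ball_cusp_lower[OF \<open>w > 0\<close> assms(1)]
  proof eventually_elim
  case (elim r)
  define m where "m = measure lebesgue (ball 0 r \<inter> cusp w a)"
  have "pi * r\<^sup>2 > 0" using elim by simp
  have scale: "k * r powr (a + 1) / (pi * r\<^sup>2) = k / pi * r powr (a - 1)" for k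
    using elim by (simp add: powr_add powr_diff power2_eq_square field_simps)
  have "w / 4 powr (a + 1) * r powr (a + 1) \<le> m"
    using elim \<open>w > 0\<close> assms(1) by (simp add: m_def)
  then have "w / 4 powr (a + 1) / pi * r powr (a - 1) \<le> m / (pi * r\<^sup>2)"
    using scale[of "w / 4 powr (a + 1)"] \<open>pi * r\<^sup>2 > 0\<close> by (metis divide_right_mono less_imp_le)
  moreover have "m \<le> 4 * w * r powr (a + 1)"
    unfolding m_def using measure_ball_cusp_upper[of w a r] \<open>w > 0\<close> assms(1) elim by simp
  then have "m / (pi * r\<^sup>2) \<le> 4 * w / pi * r powr (a - 1)"
    using scale[of "4 * w"] \<open>pi * r\<^sup>2 > 0\<close> by (metis divide_right_mono less_imp_le)
  ultimately show ?case
    using one_minus_Sigma_eps_basin_field_a[OF assms(1) elim(1)] by (simp add: m_def w_def)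
  qed
qed

theorem proposition1:
  fixes a :: real
  assumes "a > 1"
  shows "field_a a 0 = 0 \<and>
         is_stability_index (basin (field_a a) {0}) (0 :: real \<times> real) (ereal (a - 1)) \<and>
         a - 1 > 0"
proof (intro conjI)
  show "field_a a 0 = 0" by (simp add: field_a_def zero_prod_def)
  show "a - 1 > 0" using assms by simp
  have k1: "separatrix_coeff a / 4 powr (a + 1) / pi > 0" using separatrix_coeff_pos[OF assms] by simp
  show "is_stability_index (basin (field_a a) {0}) (0 :: real \<times> real) (ereal (a - 1))"
    by (rule is_stability_index_of_power_law[OF basin_field_a_lebesgue[OF assms] _ k1
          one_minus_Sigma_eps_basin_field_a_bounds[OF assms]]) (use assms in simp)
qed

end
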